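(* Let $E,F$ be Banach spaces, $1\le p<\infty$, and let $P:E\to F$ be a continuous $n$-homogeneous polynomial which is almost $p$-summing at every point of $E$. Then for every $a\in E$, the derivative $dP(a):E\to F$ (a continuous linear map) is almost $p$-summing at the origin.
   Context: $(r_j)$ are the Rademacher functions. For a finite sequence $(x_j)_{j=1}^k$ in $E$, $\Vert(x_{j})_{j=1}^k\Vert_{w,p}:=\sup_{\varphi\in B_{E'}}(\sum_{j=1}^k|\varphi(x_{j})|^{p})^{1/p}$. A mapping $f:E\to F$ is almost $p$-summing at $b\in E$ if there exist $C_b,\epsilon_b,r_b>0$ with $(\int_{0}^{1}\Vert\sum_{j=1}^{k}(f(b+x_{j})-f(b))r_{j}(t)\Vert^{2}dt)^{1/2}\leq C_{b}\Vert(x_{j})_{j=1}^{k}\Vert_{w,p}^{r_{b}}$ for all $k$ and all $x_1,\dots,x_k\in E$ with $\Vert(x_{j})_{j=1}^{k}\Vert_{w,p}<\epsilon_{b}$. *)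

theory Defs
  imports "HOL-Analysis.Analysis"
begin

text \<open>Rademacher functions r_j(t) = sign(sin(2^j pi t)), j >= 1 (up to the null set of dyadic points).\<close>
definition rademacher :: "nat \<Rightarrow> real \<Rightarrow> real" where
  "rademacher j t = (if even \<lfloor>2 ^ j * t\<rfloor> then 1 else -1)"

definition weak_pnorm :: "real \<Rightarrow> nat \<Rightarrow> (nat \<Rightarrow> 'a::real_normed_vector) \<Rightarrow> real" where
  "weak_pnorm p k x = Sup {(\<Sum>j=1..k. \<bar>\<phi> (x j)\<bar> powr p) powr (1/p) | \<phi>.
      bounded_linear \<phi> \<and> onorm \<phi> \<le> 1}"

definition almost_p_summing_at ::
  "real \<Rightarrow> ('a::real_normed_vector \<Rightarrow> 'b::real_normed_vector) \<Rightarrow> 'a \<Rightarrow> bool" where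
  "almost_p_summing_at p f b \<longleftrightarrow>
     (\<exists>C \<epsilon> r. C > 0 \<and> \<epsilon> > 0 \<and> r > 0 \<and>
       (\<forall>k. \<forall>x :: nat \<Rightarrow> 'a. weak_pnorm p k x < \<epsilon> \<longrightarrow>
          sqrt (integral {0..1} (\<lambda>t. (norm (\<Sum>j=1..k. rademacher j t *\<^sub>R (f (b + x j) - f b)))\<^sup>2))
            \<le> C * weak_pnorm p k x powr r))"

text \<open>Continuous n-linear maps A : E^n -> F, with arguments given as functions nat => E
  (only the first n arguments matter).\<close>
definition bounded_multilinear :: "nat \<Rightarrow> ((nat \<Rightarrow> 'a::real_normed_vector) \<Rightarrow> 'b::real_normed_vector) \<Rightarrow> bool" where
  "bounded_multilinear n A \<longleftrightarrow>
     (\<forall>x y. (\<forall>i<n. x i = y i) \<longrightarrow> A x = A y) \<and>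
     (\<forall>i<n. \<forall>x. linear (\<lambda>v. A (x(i := v)))) \<and>
     (\<exists>C. \<forall>x. norm (A x) \<le> C * (\<Prod>i<n. norm (x i)))"

definition continuous_homogeneous_polynomial :: "nat \<Rightarrow> ('a::real_normed_vector \<Rightarrow> 'b::real_normed_vector) \<Rightarrow> bool" where
  "continuous_homogeneous_polynomial n P \<longleftrightarrow>
     (\<exists>A. bounded_multilinear n A \<and> (\<forall>x. P x = A (\<lambda>_. x)))"

end

theory Submission
  imports Defs
begin

text \<open>On every line through \<open>a\<close> the polynomial \<open>P\<close> restricts to a polynomial
  \<open>t \<mapsto> P (a + t x) = \<Sum>k\<le>n. t^k c\<^sub>k\<close> with \<open>c\<^sub>1 = dP(a) x\<close>. Choosing weights \<open>w\<^sub>i\<close> and nodes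
  \<open>s\<^sub>i\<close> (independent of \<open>a\<close> and \<open>x\<close>) with \<open>\<Sum>\<^sub>i w\<^sub>i s\<^sub>i^k = [k = 1]\<close> for \<open>1 \<le> k \<le> n\<close> gives
  \<open>dP(a) x = \<Sum>\<^sub>i w\<^sub>i (P (a + s\<^sub>i x) - P a)\<close>. Dilating a sequence by \<open>s\<^sub>i\<close> multiplies its weak
  \<open>p\<close>-norm by at most \<open>|s\<^sub>i|\<close>, so every summand inherits the almost \<open>p\<close>-summing estimate of
  \<open>P\<close> at \<open>a\<close>, and by Cauchy-Schwarz the Rademacher average of the finite combination is
  controlled by those of its summands.\<close>

section \<open>Rademacher averages\<close>

lemma rademacher_measurable [measurable]: "rademacher j \<in> borel_measurable borel"
  unfolding rademacher_def by measurable

lemma abs_rademacher [simp]: "\<bar>rademacher j t\<bar> = 1"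
  by (simp add: rademacher_def)

text \<open>The target space need not be separable, so Rademacher sums are shown measurable by
  factoring them through the finitely many sign patterns of \<open>r\<^sub>1, ..., r\<^sub>k\<close>.\<close>
lemma simple_function_rademacher_signs:
  "simple_function borel (\<lambda>t. restrict (\<lambda>j. rademacher j t) {1..k})"
  unfolding simple_function_def space_borel
proof
  have "range (\<lambda>t. restrict (\<lambda>j. rademacher j t) {1..k}) \<subseteq> PiE {1..k} (\<lambda>_. {-1, 1})"
    by (auto simp: rademacher_def split: if_splits)
  then show "finite (range (\<lambda>t. restrict (\<lambda>j. rademacher j t) {1..k}))"
    by (rule finite_subset) (simp add: finite_PiE)
  show "\<forall>\<sigma>\<in>range (\<lambda>t. restrict (\<lambda>j. rademacher j t) {1..k}).
      (\<lambda>t. restrict (\<lambda>j. rademacher j t) {1..k}) -` {\<sigma>} \<inter> UNIV \<in> sets borel"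
  proof
    fix \<sigma> assume "\<sigma> \<in> range (\<lambda>t. restrict (\<lambda>j. rademacher j t) {1..k})"
    then have "\<sigma> \<in> extensional {1..k}" by auto
    then have "(\<lambda>t. restrict (\<lambda>j. rademacher j t) {1..k}) -` {\<sigma>} = {t. \<forall>j\<in>{1..k}. rademacher j t = \<sigma> j}"
      by (auto simp: restrict_def extensional_def fun_eq_iff)
    also have "\<dots> \<in> sets borel" by measurable
    finally show "(\<lambda>t. restrict (\<lambda>j. rademacher j t) {1..k}) -` {\<sigma>} \<inter> UNIV \<in> sets borel"
      by simp
  qed
qed

lemma rademacher_sum_measurable:
  fixes g :: "'a::real_normed_vector \<Rightarrow> real"
  shows "(\<lambda>t. g (\<Sum>j=1..k. rademacher j t *\<^sub>R v j)) \<in> borel_measurable borel"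
proof -
  have "(\<lambda>t. g (\<Sum>j=1..k. rademacher j t *\<^sub>R v j))
      = (\<lambda>\<sigma>. g (\<Sum>j=1..k. \<sigma> j *\<^sub>R v j)) \<circ> (\<lambda>t. restrict (\<lambda>j. rademacher j t) {1..k})"
    by (simp add: fun_eq_iff)
  also have "\<dots> \<in> borel_measurable borel"
    by (intro borel_measurable_simple_function simple_function_compose
        simple_function_rademacher_signs)
  finally show ?thesis .
qed

lemma rademacher_sum_square_integrable:
  fixes v :: "nat \<Rightarrow> 'a::real_normed_vector"
  shows "(\<lambda>t. (norm (\<Sum>j=1..k. rademacher j t *\<^sub>R v j))\<^sup>2) integrable_on {0..1}"
proof (rule measurable_bounded_by_integrable_imp_integrable)
  show "(\<lambda>t. (norm (\<Sum>j=1..k. rademacher j t *\<^sub>R v j))\<^sup>2) \<in> borel_measurable (lebesgue_on {0..1})"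
    using rademacher_sum_measurable[of "\<lambda>y. (norm y)\<^sup>2" v k]
    by (simp add: measurable_completion measurable_restrict_space1)
  show "(\<lambda>t::real. (\<Sum>j=1..k. norm (v j))\<^sup>2) integrable_on {0..1}"
    by (simp add: integrable_const_ivl)
  fix t :: real
  have "norm (\<Sum>j=1..k. rademacher j t *\<^sub>R v j) \<le> (\<Sum>j=1..k. norm (v j))"
    using norm_sum[of "\<lambda>j. rademacher j t *\<^sub>R v j"] by simp
  then show "norm ((norm (\<Sum>j=1..k. rademacher j t *\<^sub>R v j))\<^sup>2) \<le> (\<Sum>j=1..k. norm (v j))\<^sup>2"
    by (simp add: power_mono)
qed simp

definition rademacher_average :: "nat \<Rightarrow> (nat \<Rightarrow> 'a::real_normed_vector) \<Rightarrow> real" where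
  "rademacher_average k v = sqrt (integral {0..1} (\<lambda>t. (norm (\<Sum>j=1..k. rademacher j t *\<^sub>R v j))\<^sup>2))"

lemma rademacher_average_nonneg: "0 \<le> rademacher_average k v"
  unfolding rademacher_average_def
  by (intro real_sqrt_ge_zero integral_nonneg rademacher_sum_square_integrable) simp

lemma rademacher_average_square:
  "(rademacher_average k v)\<^sup>2 = integral {0..1} (\<lambda>t. (norm (\<Sum>j=1..k. rademacher j t *\<^sub>R v j))\<^sup>2)"
  unfolding rademacher_average_def
  by (intro real_sqrt_pow2 integral_nonneg rademacher_sum_square_integrable) simp

lemma rademacher_average_scaleR:
  "rademacher_average k (\<lambda>j. c *\<^sub>R v j) = \<bar>c\<bar> * rademacher_average k v"
proof -
  have "(norm (\<Sum>j=1..k. rademacher j t *\<^sub>R c *\<^sub>R v j))\<^sup>2 = c\<^sup>2 * (norm (\<Sum>j=1..k. rademacher j t *\<^sub>R v j))\<^sup>2" for t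
  proof -
    have "(\<Sum>j=1..k. rademacher j t *\<^sub>R c *\<^sub>R v j) = c *\<^sub>R (\<Sum>j=1..k. rademacher j t *\<^sub>R v j)"
      by (simp add: scaleR_sum_right mult.commute)
    then show ?thesis by (simp add: power_mult_distrib)
  qed
  then show ?thesis
    by (simp add: rademacher_average_def real_sqrt_mult)
qed

lemma rademacher_average_sum_le:
  fixes v :: "'i \<Rightarrow> nat \<Rightarrow> 'a::real_normed_vector"
  assumes "finite I"
  shows "(rademacher_average k (\<lambda>j. \<Sum>i\<in>I. v i j))\<^sup>2 \<le> card I * (\<Sum>i\<in>I. (rademacher_average k (v i))\<^sup>2)"
proof -
  define R where "R i t = norm (\<Sum>j=1..k. rademacher j t *\<^sub>R v i j)" for i t
  have pointwise: "(norm (\<Sum>j=1..k. rademacher j t *\<^sub>R (\<Sum>i\<in>I. v i j)))\<^sup>2 \<le> card I * (\<Sum>i\<in>I. (R i t)\<^sup>2)" for t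
  proof -
    have "norm (\<Sum>j=1..k. rademacher j t *\<^sub>R (\<Sum>i\<in>I. v i j)) \<le> (\<Sum>i\<in>I. R i t)"
      unfolding R_def scaleR_sum_right by (subst sum.swap) (rule norm_sum)
    then have "(norm (\<Sum>j=1..k. rademacher j t *\<^sub>R (\<Sum>i\<in>I. v i j)))\<^sup>2 \<le> (\<Sum>i\<in>I. R i t)\<^sup>2"
      by (simp add: power_mono)
    also have "\<dots> \<le> card I * (\<Sum>i\<in>I. (R i t)\<^sup>2)"
      using sum_squared_le_sum_of_squares[of "\<lambda>i. R i t" I] by (simp add: mult.commute)
    finally show ?thesis .
  qed
  have integrable: "(\<lambda>t. (R i t)\<^sup>2) integrable_on {0..1}" for i
    unfolding R_def by (rule rademacher_sum_square_integrable)
  have "(rademacher_average k (\<lambda>j. \<Sum>i\<in>I. v i j))\<^sup>2 \<le> integral {0..1} (\<lambda>t. card I * (\<Sum>i\<in>I. (R i t)\<^sup>2))"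
    unfolding rademacher_average_square
    by (intro integral_le pointwise rademacher_sum_square_integrable integrable_on_mult_right
        integrable_sum assms integrable)
  also have "\<dots> = card I * (\<Sum>i\<in>I. integral {0..1} (\<lambda>t. (R i t)\<^sup>2))"
    by (simp add: integral_sum[OF assms integrable])
  also have "\<dots> = card I * (\<Sum>i\<in>I. (rademacher_average k (v i))\<^sup>2)"
    by (simp add: rademacher_average_square R_def)
  finally show ?thesis .
qed

section \<open>Weak p-norms\<close>

lemma weak_pnorm_ge:
  fixes x :: "nat \<Rightarrow> 'a::real_normed_vector"
  assumes "p > 0" "bounded_linear \<phi>" "onorm \<phi> \<le> 1"
  shows "(\<Sum>j=1..k. \<bar>\<phi> (x j)\<bar> powr p) powr (1/p) \<le> weak_pnorm p k x"
  unfolding weak_pnorm_def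
proof (rule cSup_upper)
  show "(\<Sum>j=1..k. \<bar>\<phi> (x j)\<bar> powr p) powr (1/p)
      \<in> {(\<Sum>j=1..k. \<bar>\<psi> (x j)\<bar> powr p) powr (1/p) | \<psi>. bounded_linear \<psi> \<and> onorm \<psi> \<le> 1}"
    using assms by blast
  have "(\<Sum>j=1..k. \<bar>\<psi> (x j)\<bar> powr p) powr (1/p) \<le> (\<Sum>j=1..k. norm (x j) powr p) powr (1/p)"
    if "bounded_linear \<psi>" "onorm \<psi> \<le> 1" for \<psi> :: "'a \<Rightarrow> real"
  proof -
    have "\<bar>\<psi> (x j)\<bar> \<le> norm (x j)" for j
    proof -
      have "\<bar>\<psi> (x j)\<bar> \<le> onorm \<psi> * norm (x j)"
        using onorm[OF \<open>bounded_linear \<psi>\<close>] by simp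
      also have "\<dots> \<le> norm (x j)"
        using mult_right_mono[OF \<open>onorm \<psi> \<le> 1\<close> norm_ge_zero] by simp
      finally show ?thesis .
    qed
    then show ?thesis
      using \<open>p > 0\<close> by (intro powr_mono2 sum_mono sum_nonneg) auto
  qed
  then show "bdd_above {(\<Sum>j=1..k. \<bar>\<psi> (x j)\<bar> powr p) powr (1/p) | \<psi>. bounded_linear \<psi> \<and> onorm \<psi> \<le> 1}"
    by (intro bdd_aboveI[where M = "(\<Sum>j=1..k. norm (x j) powr p) powr (1/p)"]) blast
qed

lemma weak_pnorm_nonneg:
  assumes "p > 0"
  shows "0 \<le> weak_pnorm p k x"
  using weak_pnorm_ge[OF assms bounded_linear_zero, of k x] by (simp add: onorm_zero)

lemma weak_pnorm_scaleR_le: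
  fixes x :: "nat \<Rightarrow> 'a::real_normed_vector"
  assumes "p > 0"
  shows "weak_pnorm p k (\<lambda>j. c *\<^sub>R x j) \<le> \<bar>c\<bar> * weak_pnorm p k x"
  unfolding weak_pnorm_def [of p k "\<lambda>j. c *\<^sub>R x j"]
proof (rule cSup_least)
  show "{(\<Sum>j=1..k. \<bar>\<phi> (c *\<^sub>R x j)\<bar> powr p) powr (1/p) | \<phi>. bounded_linear \<phi> \<and> onorm \<phi> \<le> 1} \<noteq> {}"
  proof -
    have "bounded_linear (\<lambda>_::'a. 0::real)" "onorm (\<lambda>_::'a. 0::real) \<le> 1"
      by (simp_all add: onorm_zero)
    then show ?thesis by blast
  qed
  fix e assume "e \<in> {(\<Sum>j=1..k. \<bar>\<phi> (c *\<^sub>R x j)\<bar> powr p) powr (1/p) | \<phi>. bounded_linear \<phi> \<and> onorm \<phi> \<le> 1}"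
  then obtain \<phi> :: "'a \<Rightarrow> real" where \<phi>: "bounded_linear \<phi>" "onorm \<phi> \<le> 1"
    and e: "e = (\<Sum>j=1..k. \<bar>\<phi> (c *\<^sub>R x j)\<bar> powr p) powr (1/p)" by blast
  have "(\<Sum>j=1..k. \<bar>\<phi> (c *\<^sub>R x j)\<bar> powr p) = \<bar>c\<bar> powr p * (\<Sum>j=1..k. \<bar>\<phi> (x j)\<bar> powr p)"
    by (simp add: linear_scale[OF bounded_linear.linear[OF \<phi>(1)]] abs_mult powr_mult sum_distrib_left)
  then have "e = \<bar>c\<bar> * (\<Sum>j=1..k. \<bar>\<phi> (x j)\<bar> powr p) powr (1/p)"
    using e \<open>p > 0\<close> by (simp add: powr_mult powr_powr)
  also have "\<dots> \<le> \<bar>c\<bar> * weak_pnorm p k x"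
    by (intro mult_left_mono weak_pnorm_ge[OF \<open>p > 0\<close> \<phi>]) simp
  finally show "e \<le> \<bar>c\<bar> * weak_pnorm p k x" .
qed

section \<open>Diagonals of bounded multilinear maps\<close>

lemma bounded_multilinear_cong:
  "bounded_multilinear n A \<Longrightarrow> (\<And>i. i < n \<Longrightarrow> x i = y i) \<Longrightarrow> A x = A y"
  unfolding bounded_multilinear_def by blast

lemma bounded_multilinear_linear_slot:
  "bounded_multilinear n A \<Longrightarrow> i < n \<Longrightarrow> linear (\<lambda>v. A (x(i := v)))"
  unfolding bounded_multilinear_def by blast

lemma bounded_multilinear_zero_slot:
  "bounded_multilinear n A \<Longrightarrow> i < n \<Longrightarrow> A (x(i := 0)) = 0"
  using linear_0[OF bounded_multilinear_linear_slot] by fastforce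

lemma bounded_multilinear_bound:
  assumes "bounded_multilinear n A"
  obtains B where "B \<ge> 0" "\<And>x. norm (A x) \<le> B * (\<Prod>i<n. norm (x i))"
proof -
  obtain C where C: "\<And>x. norm (A x) \<le> C * (\<Prod>i<n. norm (x i))"
    using assms unfolding bounded_multilinear_def by blast
  have "norm (A x) \<le> \<bar>C\<bar> * (\<Prod>i<n. norm (x i))" for x
    using C[of x] by (rule order_trans) (intro mult_right_mono abs_ge_self prod_nonneg, simp)
  then show thesis using that[of "\<bar>C\<bar>"] by simp
qed

lemma bounded_multilinear_diff_telescope:
  fixes A :: "(nat \<Rightarrow> 'a::real_normed_vector) \<Rightarrow> 'b::real_normed_vector"
  assumes "bounded_multilinear n A"
  shows "A y - A z = (\<Sum>k<n. A ((\<lambda>i. if i < k then y i else z i)(k := y k - z k)))"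
proof -
  define w where "w k = (\<lambda>i. if i < k then y i else z i)" for k
  have "A (w (Suc k)) - A (w k) = A ((w k)(k := y k - z k))" if "k < n" for k
  proof -
    have "w (Suc k) = (w k)(k := y k)" "w k = (w k)(k := z k)"
      by (auto simp: w_def fun_eq_iff)
    then show ?thesis
      using linear_diff[OF bounded_multilinear_linear_slot[OF assms that]] by metis
  qed
  then have "(\<Sum>k<n. A ((w k)(k := y k - z k))) = (\<Sum>k<n. A (w (Suc k)) - A (w k))"
    by simp
  also have "\<dots> = A (w n) - A (w 0)"
    by (rule sum_lessThan_telescope)
  also have "A (w n) = A y"
    by (rule bounded_multilinear_cong[OF assms]) (simp add: w_def)
  also have "A (w 0) = A z"
    by (rule bounded_multilinear_cong[OF assms]) (simp add: w_def)
  finally show ?thesis by (simp only: w_def)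
qed

lemma bounded_multilinear_bounded_linear_slot:
  assumes "bounded_multilinear n A" "k < n"
  shows "bounded_linear (\<lambda>h. A (x(k := h)))"
proof -
  obtain B where B: "B \<ge> 0" "\<And>x. norm (A x) \<le> B * (\<Prod>i<n. norm (x i))"
    using bounded_multilinear_bound[OF assms(1)] by blast
  have lin: "linear (\<lambda>h. A (x(k := h)))"
    by (rule bounded_multilinear_linear_slot[OF assms])
  have "norm (A (x(k := h))) \<le> norm h * (B * (\<Prod>i\<in>{..<n} - {k}. norm (x i)))" for h
  proof -
    have "(\<Prod>i<n. norm ((x(k := h)) i)) = norm h * (\<Prod>i\<in>{..<n} - {k}. norm (x i))"
      using assms(2) by (simp add: prod.remove)
    then show ?thesis using B(2)[of "x(k := h)"] by (simp add: algebra_simps)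
  qed
  then show ?thesis
    using lin by (intro bounded_linear_intro[where K = "B * (\<Prod>i\<in>{..<n} - {k}. norm (x i))"])
      (simp_all add: linear_add[OF lin] linear_scale[OF lin])
qed

lemma prod_le_prod_subset_mult_power:
  fixes f :: "'a \<Rightarrow> real"
  assumes "finite I" "J \<subseteq> I" "\<And>i. i \<in> I \<Longrightarrow> 0 \<le> f i" "\<And>i. i \<in> I - J \<Longrightarrow> f i \<le> M" "1 \<le> M"
  shows "prod f I \<le> prod f J * M ^ card I"
proof -
  have "prod f (I - J) \<le> M ^ card (I - J)"
    using prod_mono[of "I - J" f "\<lambda>_. M"] assms(3,4) by auto
  also have "\<dots> \<le> M ^ card I"
    using assms(1,5) by (intro power_increasing card_mono) auto
  finally have "prod f (I - J) \<le> M ^ card I" .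
  moreover have "0 \<le> prod f J"
    using assms(2,3) by (intro prod_nonneg) auto
  ultimately have "prod f J * prod f (I - J) \<le> prod f J * M ^ card I"
    by (rule mult_left_mono)
  then show ?thesis
    using prod.subset_diff[OF assms(2,1), of f] by (simp add: mult.commute)
qed

lemma bounded_multilinear_second_order_expansion:
  assumes "bounded_multilinear n A"
  shows "A (\<lambda>_. a + h) - A (\<lambda>_. a) - (\<Sum>k<n. A ((\<lambda>_. a)(k := h))) =
    (\<Sum>k<n. \<Sum>j<k. A ((\<lambda>i. if i < j then a + h else a)(j := h, k := h)))"
proof -
  define w where "w k = (\<lambda>i. if i < k then a + h else a)" for k :: nat
  have first: "A (\<lambda>_. a + h) - A (\<lambda>_. a) = (\<Sum>k<n. A ((w k)(k := h)))"
    using bounded_multilinear_diff_telescope[OF assms, of "\<lambda>_. a + h" "\<lambda>_. a"]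
    by (simp add: w_def)
  have second: "A ((w k)(k := h)) - A ((\<lambda>_. a)(k := h)) = (\<Sum>j<k. A ((w j)(j := h, k := h)))"
    if "k < n" for k
  proof -
    define y where "y = (w k)(k := h)"
    define z where "z = (\<lambda>_::nat. a)(k := h)"
    have "A y - A z = (\<Sum>j<n. A ((\<lambda>i. if i < j then y i else z i)(j := y j - z j)))"
      by (rule bounded_multilinear_diff_telescope[OF assms])
    also have "\<dots> = (\<Sum>j<k. A ((\<lambda>i. if i < j then y i else z i)(j := y j - z j)))"
    proof (rule sum.mono_neutral_right)
      show "\<forall>j\<in>{..<n} - {..<k}. A ((\<lambda>i. if i < j then y i else z i)(j := y j - z j)) = 0"
        using bounded_multilinear_zero_slot[OF assms] by (auto simp: y_def z_def w_def)
    qed (use that in auto)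
    also have "\<dots> = (\<Sum>j<k. A ((w j)(j := h, k := h)))"
    proof (rule sum.cong[OF refl])
      fix j assume "j \<in> {..<k}"
      then have "(\<lambda>i. if i < j then y i else z i)(j := y j - z j) = (w j)(j := h, k := h)"
        by (auto simp: y_def z_def w_def fun_eq_iff)
      then show "A ((\<lambda>i. if i < j then y i else z i)(j := y j - z j)) = A ((w j)(j := h, k := h))"
        by simp
    qed
    finally show ?thesis by (simp add: y_def z_def)
  qed
  show ?thesis
    unfolding first sum_subtractf[symmetric] using second by (simp add: w_def)
qed

lemma bounded_multilinear_diagonal_remainder:
  assumes "bounded_multilinear n A"
  obtains K where "\<And>h. norm h \<le> 1 \<Longrightarrow>
    norm (A (\<lambda>_. a + h) - A (\<lambda>_. a) - (\<Sum>k<n. A ((\<lambda>_. a)(k := h)))) \<le> K * (norm h)\<^sup>2"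
proof -
  obtain B where B: "B \<ge> 0" "\<And>x. norm (A x) \<le> B * (\<Prod>i<n. norm (x i))"
    using bounded_multilinear_bound[OF assms] by blast
  define M where "M = norm a + 1"
  have summand: "norm (A ((\<lambda>i. if i < j then a + h else a)(j := h, k := h))) \<le> B * M ^ n * (norm h)\<^sup>2"
    if "j < k" "k < n" "norm h \<le> 1" for j k h
  proof -
    define v where "v = (\<lambda>i. if i < j then a + h else a)(j := h, k := h)"
    have "(\<Prod>i<n. norm (v i)) \<le> (\<Prod>i\<in>{j, k}. norm (v i)) * M ^ card {..<n}"
      by (rule prod_le_prod_subset_mult_power)
        (use that in \<open>auto simp: v_def M_def intro: order_trans[OF norm_triangle_ineq]\<close>)
    also have "(\<Prod>i\<in>{j, k}. norm (v i)) = (norm h)\<^sup>2"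
      using that by (simp add: v_def power2_eq_square)
    finally have "(\<Prod>i<n. norm (v i)) \<le> M ^ n * (norm h)\<^sup>2"
      by (simp add: mult.commute)
    then show ?thesis
      using B(2)[of v] mult_left_mono[OF _ B(1)] unfolding v_def by (fastforce simp: mult.assoc)
  qed
  have "norm (A (\<lambda>_. a + h) - A (\<lambda>_. a) - (\<Sum>k<n. A ((\<lambda>_. a)(k := h))))
      \<le> real n * real n * B * M ^ n * (norm h)\<^sup>2" if "norm h \<le> 1" for h
  proof -
    have "norm (A (\<lambda>_. a + h) - A (\<lambda>_. a) - (\<Sum>k<n. A ((\<lambda>_. a)(k := h))))
        \<le> (\<Sum>k<n. \<Sum>j<k. norm (A ((\<lambda>i. if i < j then a + h else a)(j := h, k := h))))"
      unfolding bounded_multilinear_second_order_expansion[OF assms]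
      by (intro order_trans[OF norm_sum] sum_mono norm_sum)
    also have "\<dots> \<le> (\<Sum>k<n. \<Sum>j<k. B * M ^ n * (norm h)\<^sup>2)"
      by (intro sum_mono summand) (use that in auto)
    also have "\<dots> \<le> (\<Sum>k<n. \<Sum>j<n. B * M ^ n * (norm h)\<^sup>2)"
      using B(1) by (intro sum_mono sum_mono2) (auto simp: M_def)
    also have "\<dots> \<le> real n * real n * B * M ^ n * (norm h)\<^sup>2"
      by simp
    finally show ?thesis .
  qed
  then show thesis by (rule that)
qed

lemma has_derivative_multilinear_diagonal:
  assumes "bounded_multilinear n A"
  shows "((\<lambda>x. A (\<lambda>_. x)) has_derivative (\<lambda>h. \<Sum>k<n. A ((\<lambda>_. a)(k := h)))) (at a)"
  unfolding has_derivative_at_alt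
proof (intro conjI allI impI)
  show "bounded_linear (\<lambda>h. \<Sum>k<n. A ((\<lambda>_. a)(k := h)))"
    by (intro bounded_linear_sum bounded_multilinear_bounded_linear_slot[OF assms]) simp
  obtain K where K: "\<And>h. norm h \<le> 1 \<Longrightarrow>
      norm (A (\<lambda>_. a + h) - A (\<lambda>_. a) - (\<Sum>k<n. A ((\<lambda>_. a)(k := h)))) \<le> K * (norm h)\<^sup>2"
    using bounded_multilinear_diagonal_remainder[OF assms] by blast
  fix e :: real assume "e > 0"
  show "\<exists>d>0. \<forall>y. norm (y - a) < d \<longrightarrow>
      norm (A (\<lambda>_. y) - A (\<lambda>_. a) - (\<Sum>k<n. A ((\<lambda>_. a)(k := y - a)))) \<le> e * norm (y - a)"
  proof (intro exI[of _ "min 1 (e / (\<bar>K\<bar> + 1))"] conjI allI impI)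
    show "min 1 (e / (\<bar>K\<bar> + 1)) > 0" using \<open>e > 0\<close> by simp
    fix y assume y: "norm (y - a) < min 1 (e / (\<bar>K\<bar> + 1))"
    have "norm (A (\<lambda>_. y) - A (\<lambda>_. a) - (\<Sum>k<n. A ((\<lambda>_. a)(k := y - a)))) \<le> K * (norm (y - a))\<^sup>2"
      using K[of "y - a"] y by simp
    also have "\<dots> \<le> (\<bar>K\<bar> * norm (y - a)) * norm (y - a)"
      using mult_right_mono[OF abs_ge_self[of K], of "(norm (y - a))\<^sup>2"]
      by (simp add: power2_eq_square mult.assoc)
    also have "\<dots> \<le> e * norm (y - a)"
    proof (rule mult_right_mono)
      have "\<bar>K\<bar> * norm (y - a) \<le> (\<bar>K\<bar> + 1) * (e / (\<bar>K\<bar> + 1))"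
        using y by (intro mult_mono) auto
      then show "\<bar>K\<bar> * norm (y - a) \<le> e" by simp
    qed simp
    finally show "norm (A (\<lambda>_. y) - A (\<lambda>_. a) - (\<Sum>k<n. A ((\<lambda>_. a)(k := y - a)))) \<le> e * norm (y - a)" .
  qed
qed

section \<open>Polynomials along lines\<close>

lemma sum_powers_add_scaleR_sum_powers:
  fixes c1 c2 :: "nat \<Rightarrow> 'a::real_vector"
  shows "(\<Sum>k\<le>m. t ^ k *\<^sub>R c1 k) + t *\<^sub>R (\<Sum>k\<le>m. t ^ k *\<^sub>R c2 k) =
    (\<Sum>k\<le>Suc m. t ^ k *\<^sub>R ((if k \<le> m then c1 k else 0) + (if k = 0 then 0 else c2 (k - 1))))"
proof -
  have "(\<Sum>k\<le>Suc m. t ^ k *\<^sub>R (if k \<le> m then c1 k else 0)) = (\<Sum>k\<le>m. t ^ k *\<^sub>R c1 k)"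
    by (simp add: sum.atMost_Suc)
  moreover have "(\<Sum>k\<le>Suc m. t ^ k *\<^sub>R (if k = 0 then 0 else c2 (k - 1)))
      = t *\<^sub>R (\<Sum>k\<le>m. t ^ k *\<^sub>R c2 k)"
    unfolding sum.atMost_Suc_shift by (simp add: scaleR_sum_right)
  ultimately show ?thesis
    unfolding scaleR_add_right sum.distrib by simp
qed

lemma bounded_multilinear_line_polynomial:
  assumes "bounded_multilinear n A" "m \<le> n"
  shows "\<exists>c. \<forall>t. A (\<lambda>i. if i < m then a + t *\<^sub>R x else z i) = (\<Sum>k\<le>m. t ^ k *\<^sub>R c k)"
  using assms(2)
proof (induction m arbitrary: z)
  case 0
  show ?case by (intro exI[of _ "\<lambda>_. A z"]) simp
next
  case (Suc m)
  then have "m < n" by simp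
  obtain c1 where c1: "\<And>t. A (\<lambda>i. if i < m then a + t *\<^sub>R x else (z(m := a)) i) = (\<Sum>k\<le>m. t ^ k *\<^sub>R c1 k)"
    using Suc by force
  obtain c2 where c2: "\<And>t. A (\<lambda>i. if i < m then a + t *\<^sub>R x else (z(m := x)) i) = (\<Sum>k\<le>m. t ^ k *\<^sub>R c2 k)"
    using Suc by force
  define c where "c k = (if k \<le> m then c1 k else 0) + (if k = 0 then 0 else c2 (k - 1))" for k
  have "A (\<lambda>i. if i < Suc m then a + t *\<^sub>R x else z i) = (\<Sum>k\<le>Suc m. t ^ k *\<^sub>R c k)" for t
  proof -
    define W where "W = (\<lambda>i. if i < m then a + t *\<^sub>R x else z i)"
    have lin: "linear (\<lambda>v. A (W(m := v)))"
      by (rule bounded_multilinear_linear_slot[OF assms(1) \<open>m < n\<close>])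
    have "(\<lambda>i. if i < Suc m then a + t *\<^sub>R x else z i) = W(m := a + t *\<^sub>R x)"
      by (auto simp: W_def fun_eq_iff)
    then have "A (\<lambda>i. if i < Suc m then a + t *\<^sub>R x else z i) = A (W(m := a)) + t *\<^sub>R A (W(m := x))"
      by (simp add: linear_add[OF lin] linear_scale[OF lin])
    also have "W(m := a) = (\<lambda>i. if i < m then a + t *\<^sub>R x else (z(m := a)) i)"
      by (auto simp: W_def fun_eq_iff)
    also have "W(m := x) = (\<lambda>i. if i < m then a + t *\<^sub>R x else (z(m := x)) i)"
      by (auto simp: W_def fun_eq_iff)
    also have "A (\<lambda>i. if i < m then a + t *\<^sub>R x else (z(m := a)) i) +
        t *\<^sub>R A (\<lambda>i. if i < m then a + t *\<^sub>R x else (z(m := x)) i) = (\<Sum>k\<le>Suc m. t ^ k *\<^sub>R c k)"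
      unfolding c1 c2 c_def by (rule sum_powers_add_scaleR_sum_powers)
    finally show ?thesis .
  qed
  then show ?case by blast
qed

text \<open>One step of Richardson extrapolation: mixing a family of nodes with its dilation by 2
  multiplies the \<open>k\<close>-th moment by \<open>(q - 2^(k-1)) / (q - 1)\<close>, which keeps the first moment
  and annihilates the moment of order \<open>k\<close> with \<open>2^(k-1) = q\<close>.\<close>
lemma richardson_step_moments:
  fixes w s :: "nat \<Rightarrow> real" and q :: real
  assumes "q \<noteq> 1" "k \<ge> 1"
  shows "(\<Sum>i<N + N. (if i < N then q / (q - 1) * w i else - w (i - N) / (2 * (q - 1))) *
      (if i < N then s i else 2 * s (i - N)) ^ k) = (q - 2 ^ (k - 1)) / (q - 1) * (\<Sum>i<N. w i * s i ^ k)"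
proof -
  have split: "(\<Sum>i<N + N. f i) = (\<Sum>i<N. f i) + (\<Sum>i<N. f (i + N))" for f :: "nat \<Rightarrow> real"
    using sum.atLeastLessThan_concat[of 0 N "N + N" f] sum.shift_bounds_nat_ivl[of f 0 N N]
    by (simp add: atLeast0LessThan)
  have "(2::real) ^ k = 2 * 2 ^ (k - 1)"
    using assms(2) by (simp flip: power_Suc)
  then have "- w i / (2 * (q - 1)) * (2 * s i) ^ k = - (2 ^ (k - 1)) / (q - 1) * (w i * s i ^ k)" for i
    using assms(1) by (simp add: power_mult_distrib field_simps)
  then have "(\<Sum>i<N. - w i / (2 * (q - 1)) * (2 * s i) ^ k)
      = - (2 ^ (k - 1)) / (q - 1) * (\<Sum>i<N. w i * s i ^ k)"
    by (simp add: sum_distrib_left)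
  moreover have "(\<Sum>i<N. q / (q - 1) * w i * s i ^ k) = q / (q - 1) * (\<Sum>i<N. w i * s i ^ k)"
    by (simp add: sum_distrib_left mult.assoc)
  ultimately show ?thesis
    unfolding split by (simp add: diff_divide_distrib left_diff_distrib)
qed

lemma exists_derivative_weights:
  "\<exists>(N::nat) w s. \<forall>k\<in>{1..n}. (\<Sum>i<N. w i * s i ^ k) = (if k = 1 then 1 else (0::real))"
proof -
  have "\<exists>(N::nat) w s. \<forall>k\<in>{1..Suc m}. (\<Sum>i<N. w i * s i ^ k) = (if k = 1 then 1 else (0::real))" for m
  proof (induction m)
    case 0
    show ?case by (intro exI[of _ "Suc 0"] exI[of _ "\<lambda>_. 1"]) simp
  next
    case (Suc m)
    then obtain N :: nat and w s where moments:
      "\<forall>k\<in>{1..Suc m}. (\<Sum>i<N. w i * s i ^ k) = (if k = 1 then 1 else (0::real))"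
      by blast
    define q :: real where "q = 2 ^ Suc m"
    have "q > 1" unfolding q_def by (rule one_less_power) auto
    define w' where "w' i = (if i < N then q / (q - 1) * w i else - w (i - N) / (2 * (q - 1)))" for i
    define s' where "s' i = (if i < N then s i else 2 * s (i - N))" for i
    have "(\<Sum>i<N + N. w' i * s' i ^ k) = (if k = 1 then 1 else 0)" if k: "k \<in> {1..Suc (Suc m)}" for k
    proof -
      have "(\<Sum>i<N + N. w' i * s' i ^ k) = (q - 2 ^ (k - 1)) / (q - 1) * (\<Sum>i<N. w i * s i ^ k)"
        unfolding w'_def s'_def using \<open>q > 1\<close> k by (intro richardson_step_moments) auto
      also have "\<dots> = (if k = 1 then 1 else 0)"
        using k moments \<open>q > 1\<close> by (cases "k = Suc (Suc m)") (auto simp: q_def)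
      finally show ?thesis .
    qed
    then show ?case by blast
  qed
  then obtain N :: nat and w s where "\<forall>k\<in>{1..Suc n}. (\<Sum>i<N. w i * s i ^ k) = (if k = 1 then 1 else (0::real))"
    by blast
  then have "\<forall>k\<in>{1..n}. (\<Sum>i<N. w i * s i ^ k) = (if k = 1 then 1 else (0::real))"
    by simp
  then show ?thesis by blast
qed

lemma weighted_differences_eq_derivative:
  fixes q :: "real \<Rightarrow> 'a::real_normed_vector" and N :: nat
  assumes poly: "\<And>t. q t = (\<Sum>k\<le>n. t ^ k *\<^sub>R c k)"
    and deriv: "(q has_vector_derivative d) (at 0)"
    and moments: "\<forall>k\<in>{1..n}. (\<Sum>i<N. w i * s i ^ k) = (if k = 1 then 1 else 0)"
  shows "(\<Sum>i<N. w i *\<^sub>R (q (s i) - q 0)) = d"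
proof -
  have split: "(\<Sum>k\<le>n. f k) = f 0 + (\<Sum>k=1..n. f k)" for f :: "nat \<Rightarrow> 'a"
    by (simp add: atMost_atLeast0 sum.atLeast_Suc_atMost)
  have "(q has_vector_derivative (\<Sum>k\<le>n. (real k * 0 ^ (k - 1)) *\<^sub>R c k)) (at 0)"
    unfolding poly[abs_def] by (auto intro!: derivative_eq_intros has_vector_derivative_sum)
  then have "d = (\<Sum>k\<le>n. (real k * 0 ^ (k - 1)) *\<^sub>R c k)"
    by (rule vector_derivative_unique_at[OF deriv])
  also have "\<dots> = (\<Sum>k=1..n. (\<Sum>i<N. w i * s i ^ k) *\<^sub>R c k)"
    unfolding split using moments by (auto intro!: sum.cong)
  also have "\<dots> = (\<Sum>i<N. w i *\<^sub>R (\<Sum>k=1..n. s i ^ k *\<^sub>R c k))"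
    by (simp add: scaleR_sum_left scaleR_sum_right) (rule sum.swap)
  also have "\<dots> = (\<Sum>i<N. w i *\<^sub>R (q (s i) - q 0))"
  proof -
    have "(\<Sum>k=1..n. 0 ^ k *\<^sub>R c k) = 0"
      by (intro sum.neutral) auto
    then show ?thesis unfolding poly split by simp
  qed
  finally show ?thesis ..
qed

lemma multilinear_derivative_eq_weighted_differences:
  fixes N :: nat
  assumes bm: "bounded_multilinear n A"
    and deriv: "((\<lambda>x. A (\<lambda>_. x)) has_derivative D) (at a)"
    and moments: "\<forall>k\<in>{1..n}. (\<Sum>i<N. w i * s i ^ k) = (if k = 1 then 1 else 0)"
  shows "D x = (\<Sum>i<N. w i *\<^sub>R (A (\<lambda>_. a + s i *\<^sub>R x) - A (\<lambda>_. a)))"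
proof -
  obtain c where c: "\<And>t. A (\<lambda>i. if i < n then a + t *\<^sub>R x else 0) = (\<Sum>k\<le>n. t ^ k *\<^sub>R c k)"
    using bounded_multilinear_line_polynomial[OF bm order_refl, of a x "\<lambda>_. 0"] by blast
  have poly: "A (\<lambda>_. a + t *\<^sub>R x) = (\<Sum>k\<le>n. t ^ k *\<^sub>R c k)" for t
    unfolding c[symmetric] by (rule bounded_multilinear_cong[OF bm]) simp
  have "((\<lambda>x. A (\<lambda>_. x)) \<circ> (\<lambda>t. a + t *\<^sub>R x) has_derivative D \<circ> (\<lambda>t. t *\<^sub>R x)) (at 0)"
    by (rule diff_chain_at) (auto intro!: derivative_eq_intros deriv)
  moreover have "D \<circ> (\<lambda>t. t *\<^sub>R x) = (\<lambda>t. t *\<^sub>R D x)"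
    using linear_scale[OF has_derivative_linear[OF deriv]] by (auto simp: fun_eq_iff)
  ultimately have "((\<lambda>t. A (\<lambda>_. a + t *\<^sub>R x)) has_vector_derivative D x) (at 0)"
    by (simp add: has_vector_derivative_def comp_def)
  from weighted_differences_eq_derivative[OF poly this moments] show ?thesis
    by simp
qed

section \<open>Almost p-summing estimates\<close>

definition almost_p_summing_bound ::
  "real \<Rightarrow> real \<Rightarrow> real \<Rightarrow> real \<Rightarrow> ('a::real_normed_vector \<Rightarrow> 'b::real_normed_vector) \<Rightarrow> 'a \<Rightarrow> bool" where
  "almost_p_summing_bound p C \<epsilon> r f b \<longleftrightarrow>
     (\<forall>k x. weak_pnorm p k x < \<epsilon> \<longrightarrow>
        rademacher_average k (\<lambda>j. f (b + x j) - f b) \<le> C * weak_pnorm p k x powr r)"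

lemma almost_p_summing_at_iff_bound:
  "almost_p_summing_at p f b \<longleftrightarrow>
     (\<exists>C \<epsilon> r. C > 0 \<and> \<epsilon> > 0 \<and> r > 0 \<and> almost_p_summing_bound p C \<epsilon> r f b)"
  by (simp add: almost_p_summing_at_def almost_p_summing_bound_def rademacher_average_def)

lemma almost_p_summing_atI:
  assumes "C \<ge> 0" "\<epsilon> > 0" "r > 0" "almost_p_summing_bound p C \<epsilon> r f b"
  shows "almost_p_summing_at p f b"
proof -
  have "almost_p_summing_bound p (C + 1) \<epsilon> r f b"
    using assms(4) unfolding almost_p_summing_bound_def
    by (smt (verit) mult_right_mono powr_ge_zero)
  moreover have "C + 1 > 0"
    using assms(1) by simp
  ultimately show ?thesis
    unfolding almost_p_summing_at_iff_bound using assms(2,3) by blast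
qed

lemma almost_p_summing_bound_dilation:
  fixes f :: "'a::real_normed_vector \<Rightarrow> 'b::real_normed_vector"
  assumes "p > 0" "r > 0" "C \<ge> 0" "almost_p_summing_bound p C \<epsilon> r f b" "\<bar>c\<bar> * \<delta> < \<epsilon>"
  shows "almost_p_summing_bound p (C * \<bar>c\<bar> powr r) \<delta> r (\<lambda>x. f (b + c *\<^sub>R x) - f b) 0"
  unfolding almost_p_summing_bound_def
proof (intro allI impI)
  fix k and x :: "nat \<Rightarrow> 'a"
  assume small: "weak_pnorm p k x < \<delta>"
  have "weak_pnorm p k (\<lambda>j. c *\<^sub>R x j) \<le> \<bar>c\<bar> * weak_pnorm p k x"
    by (rule weak_pnorm_scaleR_le[OF \<open>p > 0\<close>])
  also have "\<dots> < \<epsilon>"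
    using mult_left_mono[OF less_imp_le[OF small] abs_ge_zero[of c]] assms(5) by linarith
  finally have "rademacher_average k (\<lambda>j. f (b + c *\<^sub>R x j) - f b)
      \<le> C * weak_pnorm p k (\<lambda>j. c *\<^sub>R x j) powr r"
    using assms(4) unfolding almost_p_summing_bound_def by blast
  also have "\<dots> \<le> C * (\<bar>c\<bar> * weak_pnorm p k x) powr r"
    using assms(1-3) weak_pnorm_nonneg weak_pnorm_scaleR_le
    by (intro mult_left_mono powr_mono2) auto
  finally show "rademacher_average k (\<lambda>j. f (b + c *\<^sub>R (0 + x j)) - f b - (f (b + c *\<^sub>R 0) - f b))
      \<le> C * \<bar>c\<bar> powr r * weak_pnorm p k x powr r"
    using weak_pnorm_nonneg[OF \<open>p > 0\<close>] by (simp add: powr_mult mult.assoc)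
qed

lemma almost_p_summing_bound_sum:
  fixes g :: "'i \<Rightarrow> 'a::real_normed_vector \<Rightarrow> 'b::real_normed_vector" and w C :: "'i \<Rightarrow> real"
  assumes "finite I" "\<And>i. i \<in> I \<Longrightarrow> almost_p_summing_bound p (C i) \<delta> r (g i) b"
  shows "almost_p_summing_bound p (sqrt (card I * (\<Sum>i\<in>I. (\<bar>w i\<bar> * C i)\<^sup>2))) \<delta> r
    (\<lambda>x. \<Sum>i\<in>I. w i *\<^sub>R g i x) b"
  unfolding almost_p_summing_bound_def
proof (intro allI impI)
  fix k and x :: "nat \<Rightarrow> 'a"
  assume small: "weak_pnorm p k x < \<delta>"
  define \<omega> where "\<omega> = weak_pnorm p k x powr r"
  define K where "K = card I * (\<Sum>i\<in>I. (\<bar>w i\<bar> * C i)\<^sup>2)"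
  have "K \<ge> 0" by (simp add: K_def sum_nonneg)
  have summand: "\<bar>w i\<bar> * rademacher_average k (\<lambda>j. g i (b + x j) - g i b) \<le> \<bar>w i\<bar> * C i * \<omega>"
    if "i \<in> I" for i
    using assms(2)[OF that] small unfolding almost_p_summing_bound_def \<omega>_def
    by (simp add: mult.assoc mult_left_mono)
  have "(\<Sum>i\<in>I. w i *\<^sub>R g i (b + x j)) - (\<Sum>i\<in>I. w i *\<^sub>R g i b)
      = (\<Sum>i\<in>I. w i *\<^sub>R (g i (b + x j) - g i b))" for j
    by (simp add: scaleR_diff_right sum_subtractf)
  then have "(rademacher_average k (\<lambda>j. (\<Sum>i\<in>I. w i *\<^sub>R g i (b + x j)) - (\<Sum>i\<in>I. w i *\<^sub>R g i b)))\<^sup>2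
      \<le> card I * (\<Sum>i\<in>I. (\<bar>w i\<bar> * rademacher_average k (\<lambda>j. g i (b + x j) - g i b))\<^sup>2)"
    using rademacher_average_sum_le[OF assms(1), of k "\<lambda>i j. w i *\<^sub>R (g i (b + x j) - g i b)"]
    by (simp add: rademacher_average_scaleR)
  also have "\<dots> \<le> card I * (\<Sum>i\<in>I. (\<bar>w i\<bar> * C i * \<omega>)\<^sup>2)"
    by (intro mult_left_mono sum_mono power_mono summand)
      (auto intro: mult_nonneg_nonneg rademacher_average_nonneg)
  also have "\<dots> = K * \<omega>\<^sup>2"
    by (simp add: K_def power_mult_distrib sum_distrib_right mult.assoc)
  also have "\<dots> = (sqrt K * \<omega>)\<^sup>2"
    using \<open>K \<ge> 0\<close> by (simp add: power_mult_distrib)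
  finally show "rademacher_average k (\<lambda>j. (\<Sum>i\<in>I. w i *\<^sub>R g i (b + x j)) - (\<Sum>i\<in>I. w i *\<^sub>R g i b))
      \<le> sqrt K * weak_pnorm p k x powr r"
    unfolding \<omega>_def by (rule power2_le_imp_le) (simp add: \<open>K \<ge> 0\<close>)
qed

lemma almost_p_summing_at_weighted_differences:
  fixes f :: "'a::real_normed_vector \<Rightarrow> 'b::real_normed_vector" and N :: nat
  assumes "p > 0" "almost_p_summing_at p f b"
    and g: "\<And>x. g x = (\<Sum>i<N. w i *\<^sub>R (f (b + s i *\<^sub>R x) - f b))"
  shows "almost_p_summing_at p g 0"
proof -
  obtain C \<epsilon> r where "C > 0" "\<epsilon> > 0" "r > 0" and f_bound: "almost_p_summing_bound p C \<epsilon> r f b"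
    using assms(2) unfolding almost_p_summing_at_iff_bound by blast
  define S where "S = (\<Sum>i<N. \<bar>s i\<bar>)"
  define \<delta> where "\<delta> = \<epsilon> / (1 + S)"
  have "S \<ge> 0" by (simp add: S_def sum_nonneg)
  then have "\<delta> > 0" "(1 + S) * \<delta> = \<epsilon>"
    using \<open>\<epsilon> > 0\<close> by (simp_all add: \<delta>_def)
  have "\<bar>s i\<bar> * \<delta> < \<epsilon>" if "i < N" for i
  proof -
    have "\<bar>s i\<bar> < 1 + S"
      using that member_le_sum[of i "{..<N}" "\<lambda>i. \<bar>s i\<bar>"] by (simp add: S_def)
    then show ?thesis
      using \<open>\<delta> > 0\<close> \<open>(1 + S) * \<delta> = \<epsilon>\<close> by (metis mult_strict_right_mono)
  qed
  then have "almost_p_summing_bound p (C * \<bar>s i\<bar> powr r) \<delta> r (\<lambda>x. f (b + s i *\<^sub>R x) - f b) 0"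
    if "i \<in> {..<N}" for i
    using that \<open>p > 0\<close> \<open>r > 0\<close> \<open>C > 0\<close> f_bound by (intro almost_p_summing_bound_dilation) auto
  from almost_p_summing_bound_sum[of "{..<N}", OF _ this]
  have "almost_p_summing_bound p (sqrt (N * (\<Sum>i<N. (\<bar>w i\<bar> * (C * \<bar>s i\<bar> powr r))\<^sup>2))) \<delta> r g 0"
    by (simp add: g[abs_def])
  then show ?thesis
    using \<open>\<delta> > 0\<close> \<open>r > 0\<close> by (intro almost_p_summing_atI) (auto intro!: mult_nonneg_nonneg sum_nonneg)
qed

theorem mainTheorem11:
  fixes P :: "'a::banach \<Rightarrow> 'b::banach" and p :: real and n :: nat
  assumes "1 \<le> p"
    and "continuous_homogeneous_polynomial n P"
    and "\<forall>b. almost_p_summing_at p P b"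
  shows "\<forall>a. \<exists>D. (P has_derivative D) (at a) \<and> almost_p_summing_at p D 0"
proof
  fix a :: 'a
  obtain A where bm: "bounded_multilinear n A" and P: "P = (\<lambda>x. A (\<lambda>_. x))"
    using assms(2) unfolding continuous_homogeneous_polynomial_def by fast
  define D where "D h = (\<Sum>k<n. A ((\<lambda>_. a)(k := h)))" for h
  have deriv: "(P has_derivative D) (at a)"
    unfolding P D_def by (rule has_derivative_multilinear_diagonal[OF bm])
  obtain N :: nat and w s where moments:
    "\<forall>k\<in>{1..n}. (\<Sum>i<N. w i * s i ^ k) = (if k = 1 then 1 else (0::real))"
    using exists_derivative_weights by blast
  have D_eq: "D x = (\<Sum>i<N. w i *\<^sub>R (P (a + s i *\<^sub>R x) - P a))" for x
    using multilinear_derivative_eq_weighted_differences[OF bm _ moments] deriv unfolding P by blast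
  have "almost_p_summing_at p D 0"
    by (rule almost_p_summing_at_weighted_differences[where f = P and b = a])
      (use assms(1,3) D_eq in auto)
  with deriv show "\<exists>D. (P has_derivative D) (at a) \<and> almost_p_summing_at p D 0"
    by blast
qed

end
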